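(* Let $v_1=b_0^2\int a_0^{-2}g_0^2$ (the asymptotic variance, up to the factor $4\pi$, of $n^{1/2}(\hat b_{\rm EV}-b_0)$ where $\hat b_{\rm EV}=n^{-1}\mathbf y^T\mathbf y-1$), and let $$\sigma_4^2=b_0^2\Big(\frac{2\nu}{\theta_0}\Big)^2\Big(\int a_0^2\big(h_0-\tfrac{2\nu}{\theta_0}\big)^2\Big)^{-1}.$$ Define $I^4_{\delta,b_0,\theta_0}:=v_1/\sigma_4^2$. Then, with $b_0,\theta_0$ fixed, $$I^4_{\delta,b_0,\theta_0}\longrightarrow \mathrm{ineff}(\nu):=\frac{\sqrt\pi}{2}\left(\frac{2\nu+1}{2\nu}\right)^2\frac{\Gamma(\nu+\frac12)^2\,\Gamma(2\nu+\frac12)}{\Gamma(\nu)^2\,\Gamma(2\nu+1)}\quad\text{as }\delta\to0.$$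
   Context: Fix $\nu\ge1/2$. For $\alpha>0$, $\omega\in\mathbb R$ let $g^*_{\nu,\alpha}(\omega)=C_\nu\alpha^{2\nu}(\alpha^2+\omega^2)^{-(\nu+1/2)}$ with $C_\nu=\Gamma(\nu+\frac12)/(\sqrt\pi\,\Gamma(\nu))$. For $\delta,\theta>0$ and $\lambda\in[-\pi,\pi]$ let $g^\delta_{\nu,\theta}(\lambda)=\sum_{k\in\mathbb Z}g^*_{\nu,\delta\theta}(\lambda+2k\pi)$, $h^\delta_{\nu,\theta}=\partial\log g^\delta_{\nu,\theta}/\partial\theta$, and for $b>0$, $a^\delta_{b,\theta}=\dfrac{b\,g^\delta_{\nu,\theta}}{b\,g^\delta_{\nu,\theta}+(2\pi)^{-1}}$. All integrals $\int$ without limits are over $[-\pi,\pi]$ in $\lambda$. Notation: $b_0,\theta_0>0$, $g_0=g^\delta_{\nu,\theta_0}$, $h_0=h^\delta_{\nu,\theta_0}$, $a_0=a^\delta_{b_0,\theta_0}$. The model is $\mathbf y=\mathbf z+\boldsymbol\varepsilon$ with $\mathbf z=(Z(\delta),\dots,Z(n\delta))^T$, $Z$ a zero-mean stationary Gaussian process with spectral density $b_0g^*_{\nu,\theta_0}$ on $\mathbb R$, and $\boldsymbol\varepsilon\sim N(0,I_n)$ independent of $Z$; $\sigma_4^2$ is (up to $4\pi$) the asymptotic variance of the ML estimator of $b_0$ when the microergodic parameter $c_0=b_0\theta_0^{2\nu}$ is known. *)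

theory Defs
  imports "HOL-Analysis.Analysis"
begin

definition C_nu :: "real \<Rightarrow> real" where
  "C_nu \<nu> = Gamma (\<nu> + 1/2) / (sqrt pi * Gamma \<nu>)"

definition g_star :: "real \<Rightarrow> real \<Rightarrow> real \<Rightarrow> real" where
  "g_star \<nu> \<alpha> \<omega> = C_nu \<nu> * \<alpha> powr (2*\<nu>) * (\<alpha>\<^sup>2 + \<omega>\<^sup>2) powr (-(\<nu> + 1/2))"

definition g_delta :: "real \<Rightarrow> real \<Rightarrow> real \<Rightarrow> real \<Rightarrow> real" where
  "g_delta \<nu> \<delta> \<theta> l = (\<Sum>\<^sub>\<infinity>k::int. g_star \<nu> (\<delta>*\<theta>) (l + 2 * of_int k * pi))"

definition h_delta :: "real \<Rightarrow> real \<Rightarrow> real \<Rightarrow> real \<Rightarrow> real" where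
  "h_delta \<nu> \<delta> \<theta> l = deriv (\<lambda>t. ln (g_delta \<nu> \<delta> t l)) \<theta>"

definition a_delta :: "real \<Rightarrow> real \<Rightarrow> real \<Rightarrow> real \<Rightarrow> real \<Rightarrow> real" where
  "a_delta \<nu> \<delta> b \<theta> l =
     b * g_delta \<nu> \<delta> \<theta> l / (b * g_delta \<nu> \<delta> \<theta> l + 1 / (2*pi))"

definition v1 :: "real \<Rightarrow> real \<Rightarrow> real \<Rightarrow> real \<Rightarrow> real" where
  "v1 \<nu> \<delta> b0 \<theta>0 = b0\<^sup>2 * integral {-pi..pi}
     (\<lambda>l. (a_delta \<nu> \<delta> b0 \<theta>0 l) powi (-2) * (g_delta \<nu> \<delta> \<theta>0 l)\<^sup>2)"

definition sigma4_sq :: "real \<Rightarrow> real \<Rightarrow> real \<Rightarrow> real \<Rightarrow> real" where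
  "sigma4_sq \<nu> \<delta> b0 \<theta>0 = b0\<^sup>2 * (2*\<nu>/\<theta>0)\<^sup>2 * inverse (integral {-pi..pi}
     (\<lambda>l. (a_delta \<nu> \<delta> b0 \<theta>0 l)\<^sup>2 * (h_delta \<nu> \<delta> \<theta>0 l - 2*\<nu>/\<theta>0)\<^sup>2))"

definition I4 :: "real \<Rightarrow> real \<Rightarrow> real \<Rightarrow> real \<Rightarrow> real" where
  "I4 \<nu> \<delta> b0 \<theta>0 = v1 \<nu> \<delta> b0 \<theta>0 / sigma4_sq \<nu> \<delta> b0 \<theta>0"

definition ineff :: "real \<Rightarrow> real" where
  "ineff \<nu> = sqrt pi / 2 * ((2*\<nu> + 1) / (2*\<nu>))\<^sup>2 *
     ((Gamma (\<nu> + 1/2))\<^sup>2 * Gamma (2*\<nu> + 1/2)) / ((Gamma \<nu>)\<^sup>2 * Gamma (2*\<nu> + 1))"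

end

theory Submission
  imports Defs "HOL-Real_Asymp.Real_Asymp"
begin

(* Put alpha = delta * theta0, c = 1/(2 pi), and let G = g^delta be the aliased Matern density.
   Writing G as the centre term g* plus a series of aliased pairs, and N for the same series
   weighted by alpha^2/(alpha^2 + omega^2), term-by-term differentiation in theta gives
   h = 2 nu/theta - (2 nu + 1)/theta * N/G.  Hence, with P = (b0 N/(b0 G + c))^2,
       I4 = ((2 nu + 1)/(2 nu))^2 / b0^2 * (alpha * int (b0 G + c)^2) * (int P / alpha).
   Both integrals are evaluated by the substitution l = alpha u.  The aliased terms are
   O(alpha^(2 nu)) uniformly on [-pi, pi], g*(alpha u) = C_nu/alpha * (1 + u^2)^(-nu - 1/2), and
   N/G ~ 1/(1 + u^2); dominated convergence as alpha -> 0+ then gives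
       alpha * int (b0 G + c)^2 --> b0^2 C_nu^2 B(1/2, 2 nu + 1/2),  int P / alpha --> B(1/2, 3/2),
   using int_R (1 + u^2)^(-s) du = B(1/2, s - 1/2).  The product is ineff nu by Gamma algebra. *)

lemma infsum_int_symmetric_pairs:
  fixes f :: "int \<Rightarrow> real"
  assumes nonneg: "\<And>k. f k \<ge> 0"
    and summable_pairs: "summable (\<lambda>n. f (int n + 1) + f (-(int n + 1)))"
  shows "infsum f UNIV = f 0 + (\<Sum>n. f (int n + 1) + f (-(int n + 1)))"
proof -
  define pos neg :: "nat \<Rightarrow> int" where "pos n = int n + 1" and "neg n = -(int n + 1)" for n
  have summable_pos: "summable (f \<circ> pos)" and summable_neg: "summable (f \<circ> neg)"
    by (rule summable_comparison_test'[OF summable_pairs, of 0];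
        simp add: pos_def neg_def nonneg add_increasing add_increasing2)+
  have "(f \<circ> pos has_sum suminf (f \<circ> pos)) UNIV" "(f \<circ> neg has_sum suminf (f \<circ> neg)) UNIV"
    by (rule sums_nonneg_imp_has_sum; use summable_pos summable_neg nonneg in \<open>simp add: summable_sums\<close>)+
  moreover have "inj pos" "inj neg" by (auto simp: inj_def pos_def neg_def)
  ultimately have "(f has_sum suminf (f \<circ> pos)) (range pos)" "(f has_sum suminf (f \<circ> neg)) (range neg)"
    by (simp_all add: has_sum_reindex)
  hence pairs: "(f has_sum (suminf (f \<circ> pos) + suminf (f \<circ> neg))) (range pos \<union> range neg)"
    by (rule has_sum_Un_disjoint) (auto simp: pos_def neg_def)
  have centre: "(f has_sum f 0) {0}" by (rule has_sum_finiteI) auto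
  have "(f has_sum (f 0 + (suminf (f \<circ> pos) + suminf (f \<circ> neg)))) ({0} \<union> (range pos \<union> range neg))"
    by (rule has_sum_Un_disjoint[OF centre pairs]) (auto simp: pos_def neg_def)
  moreover have "{0} \<union> (range pos \<union> range neg) = UNIV"
  proof -
    have "k \<in> range pos \<union> range neg" if "k \<noteq> 0" for k :: int
    proof (cases "k > 0")
      case True
      hence "k = pos (nat (k - 1))" by (simp add: pos_def)
      thus ?thesis by blast
    next
      case False
      with that have "k = neg (nat (-k - 1))" by (simp add: neg_def)
      thus ?thesis by blast
    qed
    thus ?thesis by blast
  qed
  ultimately have "infsum f UNIV = f 0 + (suminf (f \<circ> pos) + suminf (f \<circ> neg))"
    by (simp add: infsumI)
  also have "suminf (f \<circ> pos) + suminf (f \<circ> neg) = (\<Sum>n. f (int n + 1) + f (-(int n + 1)))"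
    using suminf_add[OF summable_pos summable_neg] by (simp add: pos_def neg_def)
  finally show ?thesis .
qed

(* The kernel (1 + u^2)^(-s): the Matern density is a rescaled power of it. *)
definition kern :: "real \<Rightarrow> real \<Rightarrow> real" where
  "kern s u = (1 + u\<^sup>2) powr (-s)"

lemma kern_pos: "kern s u > 0"
proof -
  have "1 + u\<^sup>2 > 0" by (simp add: add_pos_nonneg)
  thus ?thesis by (simp add: kern_def)
qed

lemma continuous_on_kern: "continuous_on A (kern s)"
  unfolding kern_def[abs_def] by (intro continuous_intros) (auto simp: add_nonneg_eq_0_iff)

lemma kern_square: "(kern s u)\<^sup>2 = kern (2 * s) u"
  using powr_add[of "1 + u\<^sup>2" "-s" "-s", symmetric] by (simp add: kern_def power2_eq_square)

lemma kern_two: "kern 2 u = (1 / (1 + u\<^sup>2))\<^sup>2"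
proof -
  have "(1 + u\<^sup>2) powr 2 = (1 + u\<^sup>2)^2" by (simp add: add_pos_nonneg powr_realpow)
  thus ?thesis by (simp add: kern_def powr_minus power_inverse divide_inverse)
qed

(* The substitution u = sqrt(t/(1-t)) maps (0,1) onto (0,oo); its derivative. *)
lemma has_real_derivative_sqrt_ratio:
  fixes t :: real
  assumes "0 < t" "t < 1"
  shows "((\<lambda>t. sqrt (t/(1-t))) has_real_derivative 1/(2 * sqrt t * (1-t) * sqrt (1-t))) (at t)"
proof -
  have raw: "((\<lambda>t. sqrt (t/(1-t))) has_real_derivative
      (inverse (sqrt (t/(1-t))) / 2) * ((1*(1-t) - t*(-1))/(1-t)\<^sup>2)) (at t)"
    using assms by (auto intro!: derivative_eq_intros simp: power2_eq_square divide_less_0_iff)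
  have "(inverse (sqrt (t/(1-t))) / 2) * ((1*(1-t) - t*(-1))/(1-t)\<^sup>2)
      = 1/(2 * sqrt t * (1-t) * sqrt (1-t))"
  proof -
    have root: "sqrt (1-t) > 0" "sqrt t > 0" "sqrt (1-t) * sqrt (1-t) = 1 - t" using assms by auto
    have algebra: "inverse (a/b)/2 * ((1*(b*b) - t*(-1))/(b*b)\<^sup>2) = 1/(2 * a*(b*b)*b)"
      if "a > 0" "b > 0" "b*b + t = 1" for a b :: real
      using that by (simp add: field_simps power2_eq_square)
    show ?thesis unfolding real_sqrt_divide
      by (subst (1 2 4) root(3)[symmetric]) (rule algebra, use root in auto)
  qed
  with raw show ?thesis by simp
qed

lemma kern_substitution:
  fixes t :: real
  assumes "0 < t" "t < 1"
  shows "kern s (sqrt (t/(1-t))) * (1/(2 * sqrt t * (1-t) * sqrt (1-t)))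
       = t powr (1/2 - 1) * (1 - t) powr ((s-1/2) - 1) / 2"
proof -
  have "1 + (sqrt (t/(1-t)))\<^sup>2 = 1/(1-t)" using assms by (simp add: field_simps)
  hence kern_eq: "kern s (sqrt (t/(1-t))) = (1-t) powr s"
    using assms by (simp add: kern_def powr_minus powr_divide)
  have t_pow: "t powr (1/2 - 1) = 1/sqrt t"
    using assms by (simp add: powr_minus powr_half_sqrt inverse_eq_divide)
  have "(1-t) powr (3/2) = (1-t) * sqrt (1-t)"
    using powr_add[of "1-t" 1 "1/2"] assms by (simp add: powr_half_sqrt)
  hence one_minus_t_pow: "(1-t) powr ((s-1/2) - 1) = (1-t) powr s / ((1-t) * sqrt (1-t))"
    using powr_diff[of "1-t" s "3/2"] assms by simp
  show ?thesis unfolding kern_eq t_pow one_minus_t_pow by simp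
qed

lemma kern_half_line_integral:
  assumes s: "s > 1/2"
  shows "set_integrable lborel (einterval 0 \<infinity>) (kern s)"
    and "(LBINT u=0..\<infinity>. kern s u) = Beta (1/2) (s-1/2) / 2"
proof -
  define g :: "real \<Rightarrow> real" where "g t = sqrt (t/(1-t))" for t
  define g' :: "real \<Rightarrow> real" where "g' t = 1/(2 * sqrt t * (1-t) * sqrt (1-t))" for t
  define B :: "real \<Rightarrow> real" where "B t = t powr (1/2 - 1) * (1 - t) powr ((s-1/2) - 1)" for t
  have subst: "kern s (g t) * g' t = B t / 2" if "0 < t" "t < 1" for t
    unfolding g_def g'_def B_def by (rule kern_substitution[OF that])
  have int_B: "set_integrable lborel {0..1} B"
    unfolding B_def by (rule integrable_Beta) (use s in auto)
  have "set_integrable lborel (einterval 0 1) (\<lambda>t. B t / 2)"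
    by (rule set_integrable_divide, rule set_integrable_subset[OF int_B])
       (auto simp: zero_ereal_def one_ereal_def)
  hence int_subst: "set_integrable lborel (einterval (ereal 0) (ereal 1)) (\<lambda>t. kern s (g t) * g' t)"
    by (rule set_integrable_cong[THEN iffD1, rotated -1]) (auto simp: subst zero_ereal_def one_ereal_def)
  have "((\<lambda>t::real. sqrt (t/(1-t))) \<longlongrightarrow> 0) (at_right 0)" by real_asymp
  hence lim0: "((ereal \<circ> g \<circ> real_of_ereal) \<longlongrightarrow> ereal 0) (at_right (ereal 0))"
    unfolding ereal_tendsto_simps g_def[abs_def] .
  have "filterlim (\<lambda>t::real. sqrt (t/(1-t))) at_top (at_left 1)" by real_asymp
  hence lim1: "((ereal \<circ> g \<circ> real_of_ereal) \<longlongrightarrow> \<infinity>) (at_left (ereal 1))"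
    unfolding ereal_tendsto_simps g_def[abs_def] .
  have deriv: "DERIV g x :> g' x" if "ereal 0 < ereal x" "ereal x < ereal 1" for x
    using has_real_derivative_sqrt_ratio[of x] that unfolding g_def[abs_def] g'_def by simp
  have cont_g': "isCont g' x" if "ereal 0 < ereal x" "ereal x < ereal 1" for x
    using that unfolding g'_def[abs_def] by (intro continuous_intros) auto
  have "isCont (kern s) x" for x
    using continuous_on_kern[of UNIV s] by (simp add: continuous_on_eq_continuous_at)
  note result = interval_integral_substitution_nonneg[of "ereal 0" "ereal 1" g g' "kern s" "ereal 0" \<infinity>,
      OF _ deriv this cont_g' less_imp_le[OF kern_pos] _ lim0 lim1 int_subst]
  show "set_integrable lborel (einterval 0 \<infinity>) (kern s)"
    using result(1) by (simp add: zero_ereal_def g'_def)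
  have "(LBINT u=0..\<infinity>. kern s u) = (LBINT t=ereal 0..ereal 1. kern s (g t) * g' t)"
    using result(2) by (simp add: zero_ereal_def g'_def)
  also have "\<dots> = (LBINT t=ereal 0..ereal 1. B t) / 2"
    by (subst interval_integral_cong[where g="\<lambda>t. B t / 2"]) (auto simp: subst)
  also have "(LBINT t=ereal 0..ereal 1. B t) = integral {0..1} B"
    by (rule interval_integral_eq_integral) (use int_B in auto)
  also have "integral {0..1} B = Beta (1/2) (s-1/2)"
    unfolding B_def by (rule integral_unique, rule has_integral_Beta_real) (use s in auto)
  finally show "(LBINT u=0..\<infinity>. kern s u) = Beta (1/2) (s-1/2) / 2" .
qed

(* The Beta integral over the whole line, by evenness of the kernel. *)
lemma has_integral_kern:
  assumes s: "s > 1/2"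
  shows "(kern s has_integral Beta (1/2) (s-1/2)) UNIV"
proof -
  have e: "einterval 0 \<infinity> = {0<..}" by (auto simp: einterval_def zero_ereal_def)
  have "has_bochner_integral lborel (\<lambda>x. indicator {0<..} x *\<^sub>R kern s x) (Beta (1/2) (s-1/2) / 2)"
    using kern_half_line_integral[OF s]
    unfolding e set_integrable_def interval_lebesgue_integral_0_infty set_lebesgue_integral_def
    by (simp add: has_bochner_integral_iff)
  moreover have "AE x in lborel. indicator {0<..} x *\<^sub>R kern s x = indicator {0..} x *\<^sub>R kern s x"
    using AE_lborel_singleton[of 0] by eventually_elim (auto simp: indicator_def)
  ultimately have "has_bochner_integral lborel (\<lambda>x. indicator {0..} x *\<^sub>R kern s x) (Beta (1/2) (s-1/2) / 2)"
    by (subst (asm) has_bochner_integral_cong_AE) (auto simp: kern_def[abs_def])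
  hence "has_bochner_integral lborel (kern s) (2 *\<^sub>R (Beta (1/2) (s-1/2) / 2))"
    by (rule has_bochner_integral_even_function) (simp add: kern_def)
  hence "has_bochner_integral lborel (kern s) (Beta (1/2) (s-1/2))" by simp
  thus ?thesis
    using has_integral_integral_lborel has_bochner_integral_iff by metis
qed

lemma kern_integrable: "s > 1/2 \<Longrightarrow> kern s integrable_on UNIV"
  and integral_kern: "s > 1/2 \<Longrightarrow> integral UNIV (kern s) = Beta (1/2) (s-1/2)"
  using has_integral_kern[of s] by (auto simp: has_integral_iff)

(* Truncation of a function on R to [-pi/alpha, pi/alpha]: the shape an integral over [-pi, pi]
   takes after the substitution l = alpha u. *)
definition trunc :: "real \<Rightarrow> (real \<Rightarrow> real) \<Rightarrow> real \<Rightarrow> real" where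
  "trunc \<alpha> f u = (if u \<in> {-pi/\<alpha>..pi/\<alpha>} then f u else 0)"

lemma integral_cmult_real: "integral S (\<lambda>x. c * f x) = c * integral S (f :: _ \<Rightarrow> real)"
  using integral_cmul[of S c f] by simp

lemma integral_rescale:
  fixes F :: "real \<Rightarrow> real"
  assumes a: "\<alpha> > 0" and c: "continuous_on {-pi..pi} F"
  shows "trunc \<alpha> (\<lambda>u. F (\<alpha>*u)) integrable_on UNIV"
    and "integral {-pi..pi} F = \<alpha> * integral UNIV (trunc \<alpha> (\<lambda>u. F (\<alpha>*u)))"
proof -
  have img: "(\<lambda>x. x/\<alpha>) ` {-pi..pi} = {-pi/\<alpha>..pi/\<alpha>}" using a by simp
  have "(\<lambda>x. F(\<alpha>*x)) integrable_on {-pi/\<alpha>..pi/\<alpha>}"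
    using integrable_stretch_real[OF integrable_continuous_interval[OF c], of \<alpha>] a img by simp
  thus "trunc \<alpha> (\<lambda>u. F (\<alpha>*u)) integrable_on UNIV"
    unfolding trunc_def[abs_def] by (rule iffD2[OF integrable_restrict_UNIV])
  have "integral UNIV (trunc \<alpha> (\<lambda>u. F (\<alpha>*u))) = integral {-pi/\<alpha>..pi/\<alpha>} (\<lambda>x. F(\<alpha>*x))"
    unfolding trunc_def[abs_def] by (rule integral_restrict_UNIV)
  also have "\<dots> = (1/\<alpha>) * integral {-pi..pi} F"
    using integral_stretch_real[of \<alpha> "-pi" pi F] a img by simp
  finally show "integral {-pi..pi} F = \<alpha> * integral UNIV (trunc \<alpha> (\<lambda>u. F (\<alpha>*u)))"
    using a by simp
qed

lemma tendsto_integral_at_right_dominated: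
  fixes f :: "real \<Rightarrow> real \<Rightarrow> real" and \<phi> \<psi> :: "real \<Rightarrow> real"
  assumes phi: "\<phi> integrable_on UNIV"
    and integrable: "\<And>\<alpha>. 0 < \<alpha> \<Longrightarrow> \<alpha> < 1 \<Longrightarrow> f \<alpha> integrable_on UNIV"
    and dominated: "\<And>\<alpha> u. 0 < \<alpha> \<Longrightarrow> \<alpha> < 1 \<Longrightarrow> \<bar>f \<alpha> u\<bar> \<le> \<phi> u"
    and pointwise: "\<And>u. ((\<lambda>\<alpha>. f \<alpha> u) \<longlongrightarrow> \<psi> u) (at_right 0)"
  shows "((\<lambda>\<alpha>. integral UNIV (f \<alpha>)) \<longlongrightarrow> integral UNIV \<psi>) (at_right 0)"
proof (rule tendsto_at_right_sequentially[of 0 1])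
  fix S :: "nat \<Rightarrow> real"
  assume S0: "\<And>n. 0 < S n" and S1: "\<And>n. S n < 1" and "S \<longlonglongrightarrow> 0"
  moreover have "S n \<noteq> 0" for n using S0[of n] by simp
  ultimately have S_lim: "filterlim S (at_right 0) sequentially"
    unfolding filterlim_at by (auto intro!: always_eventually)
  show "(\<lambda>n. integral UNIV (f (S n))) \<longlonglongrightarrow> integral UNIV \<psi>"
    by (rule dominated_convergence(2)[of "\<lambda>k. f (S k)" UNIV \<phi>])
       (use integrable dominated S0 S1 phi filterlim_compose[OF pointwise S_lim] in auto)
qed simp

lemma eventually_in_rescaled_range:
  assumes "a > 0"
  shows "eventually (\<lambda>\<alpha>. 0 < \<alpha> \<and> \<alpha> < a \<and> u \<in> {-pi/\<alpha>..pi/\<alpha>}) (at_right 0)"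
proof -
  define m where "m = min a (pi / (\<bar>u\<bar> + 1))"
  have m: "m > 0" unfolding m_def using assms by (simp add: add_pos_nonneg)
  have "0 < y \<and> y < a \<and> u \<in> {-pi/y..pi/y}" if y: "0 < y" "y < m" for y
  proof -
    have "y < a" "y < pi / (\<bar>u\<bar> + 1)" using y unfolding m_def by auto
    hence "y * (\<bar>u\<bar> + 1) < pi" by (simp add: field_simps add_pos_nonneg)
    hence "\<bar>u\<bar> \<le> pi / y" using y by (simp add: field_simps)
    thus ?thesis using y \<open>y < a\<close> by auto
  qed
  thus ?thesis unfolding eventually_at_right[OF m] using m by blast
qed

lemma abs_rescaled_le_pi: "\<alpha> > 0 \<Longrightarrow> u \<in> {-pi/\<alpha>..pi/\<alpha>} \<Longrightarrow> \<bar>\<alpha>*u\<bar> \<le> pi"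
  by (auto simp: abs_mult field_simps abs_le_iff)

lemma trunc_integrable: "f integrable_on UNIV \<Longrightarrow> trunc \<alpha> f integrable_on UNIV"
  unfolding trunc_def[abs_def]
  by (rule iffD2[OF integrable_restrict_UNIV], rule integrable_on_subinterval) auto

lemma integral_trunc_le:
  assumes "f integrable_on UNIV" "\<And>u. f u \<ge> 0"
  shows "integral UNIV (trunc \<alpha> f) \<le> integral UNIV f"
  by (rule integral_le) (use assms trunc_integrable in \<open>auto simp: trunc_def\<close>)

lemma tendsto_integral_trunc:
  assumes "f integrable_on UNIV" "\<And>u. f u \<ge> 0"
  shows "((\<lambda>\<alpha>. integral UNIV (trunc \<alpha> f)) \<longlongrightarrow> integral UNIV f) (at_right 0)"
proof (rule tendsto_integral_at_right_dominated[OF assms(1) trunc_integrable[OF assms(1)]])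
  show "\<bar>trunc \<alpha> f u\<bar> \<le> f u" for \<alpha> u using assms(2) by (simp add: trunc_def)
  show "((\<lambda>\<alpha>. trunc \<alpha> f u) \<longlongrightarrow> f u) (at_right 0)" for u
  proof (rule tendsto_eventually)
    show "eventually (\<lambda>\<alpha>. trunc \<alpha> f u = f u) (at_right 0)"
      using eventually_in_rescaled_range[OF zero_less_one, of u] by eventually_elim (simp add: trunc_def)
  qed
qed

lemma rescaled_ratio: "(\<alpha>::real) > 0 \<Longrightarrow> \<alpha>\<^sup>2 / (\<alpha>\<^sup>2 + (\<alpha>*u)\<^sup>2) = 1 / (1 + u\<^sup>2)"
proof -
  assume "\<alpha> > 0"
  moreover have "\<alpha>\<^sup>2 + (\<alpha>*u)\<^sup>2 = \<alpha>\<^sup>2 * (1 + u\<^sup>2)" by (simp add: power2_eq_square algebra_simps)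
  ultimately show ?thesis by (simp add: add_pos_nonneg)
qed

lemma filterlim_scale_at_right_0:
  fixes c :: real
  assumes "c > 0"
  shows "filterlim (\<lambda>x. x * c) (at_right 0) (at_right 0)"
proof -
  have "((\<lambda>x. x * c) \<longlongrightarrow> 0 * c) (at_right 0)" by (intro tendsto_intros)
  moreover have "eventually (\<lambda>x. x * c \<in> {0<..} \<and> x * c \<noteq> 0) (at_right 0)"
    using eventually_at_right_less[of 0] by eventually_elim (use assms in auto)
  ultimately show ?thesis unfolding filterlim_at by simp
qed

lemma C_nu_pos: "\<nu> > 0 \<Longrightarrow> C_nu \<nu> > 0"
  by (simp add: C_nu_def Gamma_real_pos)

lemma g_star_pos: "\<nu> > 0 \<Longrightarrow> \<alpha> > 0 \<Longrightarrow> g_star \<nu> \<alpha> \<omega> > 0"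
  unfolding g_star_def by (intro mult_pos_pos C_nu_pos) (auto simp: add_pos_nonneg)

lemma isCont_g_star: "\<alpha> > 0 \<Longrightarrow> isCont (g_star \<nu> \<alpha>) \<omega>"
  unfolding g_star_def[abs_def] by (intro continuous_intros) (auto simp: add_pos_nonneg)

lemma continuous_on_g_star: "\<alpha> > 0 \<Longrightarrow> continuous_on A (g_star \<nu> \<alpha>)"
  by (intro continuous_at_imp_continuous_on ballI isCont_g_star)

lemma g_star_rescaled:
  assumes "\<alpha> > 0"
  shows "g_star \<nu> \<alpha> (\<alpha> * u) = C_nu \<nu> / \<alpha> * kern (\<nu> + 1/2) u"
proof -
  have "\<alpha>\<^sup>2 + (\<alpha>*u)\<^sup>2 = \<alpha>\<^sup>2 * (1 + u\<^sup>2)" by (simp add: algebra_simps power2_eq_square)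
  hence "(\<alpha>\<^sup>2 + (\<alpha>*u)\<^sup>2) powr (-(\<nu> + 1/2)) = (\<alpha> powr 2) powr (-(\<nu> + 1/2)) * kern (\<nu> + 1/2) u"
    using assms by (simp add: kern_def powr_mult powr_realpow add_pos_nonneg)
  also have "(\<alpha> powr 2) powr (-(\<nu> + 1/2)) = \<alpha> powr (-(2*\<nu>+1))"
    unfolding powr_powr by (rule arg_cong[of _ _ "(powr) \<alpha>"]) simp
  finally have "g_star \<nu> \<alpha> (\<alpha> * u) = C_nu \<nu> * (\<alpha> powr (2*\<nu>) * \<alpha> powr (-(2*\<nu>+1))) * kern (\<nu> + 1/2) u"
    by (simp add: g_star_def mult_ac)
  also have "\<alpha> powr (2*\<nu>) * \<alpha> powr (-(2*\<nu>+1)) = 1 / \<alpha>"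
    using assms by (simp add: powr_add[symmetric] powr_minus divide_inverse)
  finally show ?thesis by simp
qed

lemma g_star_tail_le:
  assumes "\<nu> \<ge> 1/2" "\<alpha> > 0" "1 \<le> r" "r \<le> \<bar>\<omega>\<bar>"
  shows "g_star \<nu> \<alpha> \<omega> \<le> C_nu \<nu> * \<alpha> powr (2*\<nu>) / r\<^sup>2"
proof -
  have r2: "r\<^sup>2 \<le> \<omega>\<^sup>2" "1 \<le> r\<^sup>2"
    using assms(3,4) by (metis abs_le_square_iff abs_of_nonneg order_trans zero_le_one, simp add: one_le_power)
  have "(\<alpha>\<^sup>2 + \<omega>\<^sup>2) powr (-(\<nu> + 1/2)) \<le> (r\<^sup>2) powr (-(\<nu> + 1/2))"
    by (rule powr_mono2') (use assms r2 in \<open>auto intro: add_increasing\<close>)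
  also have "\<dots> \<le> (r\<^sup>2) powr (-1)"
    by (rule powr_mono) (use assms r2 in auto)
  also have "\<dots> = 1 / r\<^sup>2" using r2 by (simp add: powr_minus divide_inverse)
  finally have "(\<alpha>\<^sup>2 + \<omega>\<^sup>2) powr (-(\<nu> + 1/2)) \<le> 1 / r\<^sup>2" .
  moreover have "C_nu \<nu> * \<alpha> powr (2*\<nu>) \<ge> 0" using C_nu_pos[of \<nu>] assms by simp
  ultimately show ?thesis
    unfolding g_star_def using mult_left_mono by fastforce
qed

(* The weight alpha^2/(alpha^2 + omega^2) g*: it appears in the theta-derivative of g*. *)
definition w_star :: "real \<Rightarrow> real \<Rightarrow> real \<Rightarrow> real" where
  "w_star \<nu> \<alpha> \<omega> = g_star \<nu> \<alpha> \<omega> * (\<alpha>\<^sup>2 / (\<alpha>\<^sup>2 + \<omega>\<^sup>2))"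

lemma isCont_w_star: "\<alpha> > 0 \<Longrightarrow> isCont (w_star \<nu> \<alpha>) \<omega>"
  unfolding w_star_def[abs_def]
  by (intro continuous_intros isCont_g_star) (auto simp: add_pos_nonneg)

lemma w_star_bounds:
  assumes "\<nu> > 0" "\<alpha> > 0" "\<bar>l\<bar> \<le> \<bar>\<omega>\<bar>"
  shows "0 \<le> w_star \<nu> \<alpha> \<omega>" "w_star \<nu> \<alpha> \<omega> \<le> \<alpha>\<^sup>2 / (\<alpha>\<^sup>2 + l\<^sup>2) * g_star \<nu> \<alpha> \<omega>"
proof -
  have g: "g_star \<nu> \<alpha> \<omega> > 0" using g_star_pos assms by blast
  show "0 \<le> w_star \<nu> \<alpha> \<omega>" unfolding w_star_def using g by (simp add: add_nonneg_nonneg)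
  have "\<alpha>\<^sup>2 / (\<alpha>\<^sup>2 + \<omega>\<^sup>2) \<le> \<alpha>\<^sup>2 / (\<alpha>\<^sup>2 + l\<^sup>2)"
    using assms by (intro divide_left_mono) (auto simp: add_pos_nonneg abs_le_square_iff)
  hence "g_star \<nu> \<alpha> \<omega> * (\<alpha>\<^sup>2 / (\<alpha>\<^sup>2 + \<omega>\<^sup>2)) \<le> g_star \<nu> \<alpha> \<omega> * (\<alpha>\<^sup>2 / (\<alpha>\<^sup>2 + l\<^sup>2))"
    using g by (intro mult_left_mono) auto
  thus "w_star \<nu> \<alpha> \<omega> \<le> \<alpha>\<^sup>2 / (\<alpha>\<^sup>2 + l\<^sup>2) * g_star \<nu> \<alpha> \<omega>"
    unfolding w_star_def by (metis mult.commute)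
qed

lemma has_real_derivative_g_star_scale:
  assumes "\<delta> > 0" "t > 0"
  shows "((\<lambda>t. g_star \<nu> (\<delta>*t) \<omega>) has_real_derivative
     (2*\<nu>/t * g_star \<nu> (\<delta>*t) \<omega> - (2*\<nu>+1)/t * w_star \<nu> (\<delta>*t) \<omega>)) (at t)"
proof -
  define Y where "Y = (\<delta> * t)\<^sup>2 + \<omega>\<^sup>2"
  have Y: "Y > 0" using assms by (simp add: Y_def add_pos_nonneg)
  hence Y_expanded: "0 < \<omega> * \<omega> + \<delta> * (\<delta> * (t * t))" by (simp add: Y_def power2_eq_square algebra_simps)
  define A where "A = (\<delta> * t) powr (2 * \<nu>)"
  define B where "B = Y powr (-(\<nu> + 1/2))"
  have raw: "((\<lambda>t. g_star \<nu> (\<delta>*t) \<omega>) has_real_derivative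
      C_nu \<nu> * (2*\<nu> * (\<delta>*t) powr (2*\<nu> - 1) * \<delta>) * B
      + C_nu \<nu> * A * (-(\<nu> + 1/2) * Y powr (-(\<nu> + 1/2) - 1) * (2 * (\<delta>*t) * \<delta>))) (at t)"
    unfolding g_star_def[abs_def] Y_def A_def B_def using assms Y_expanded
    by (auto intro!: derivative_eq_intros simp: add_pos_nonneg power2_eq_square algebra_simps)
  have "(\<delta>*t) powr (2*\<nu> - 1) = A / (\<delta>*t)"
    unfolding A_def using assms by (simp add: powr_diff)
  moreover have "Y powr (-(\<nu> + 1/2) - 1) = B / Y"
    unfolding B_def using Y by (simp only: powr_diff) simp
  moreover have "C_nu \<nu> * (2*\<nu> * (A / (\<delta>*t)) * \<delta>) * B + C_nu \<nu> * A * (-(\<nu> + 1/2) * (B / Y) * (2 * (\<delta>*t) * \<delta>))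
      = 2*\<nu>/t * g_star \<nu> (\<delta>*t) \<omega> - (2*\<nu>+1)/t * w_star \<nu> (\<delta>*t) \<omega>"
    unfolding w_star_def g_star_def Y_def[symmetric] A_def[symmetric] B_def[symmetric]
    using assms Y by (simp add: field_simps power2_eq_square)
  ultimately show ?thesis using raw by simp
qed

definition alias_pair :: "(real \<Rightarrow> real) \<Rightarrow> real \<Rightarrow> nat \<Rightarrow> real" where
  "alias_pair f l n = f (l + 2 * (real n + 1) * pi) + f (l - 2 * (real n + 1) * pi)"

definition aliased :: "(real \<Rightarrow> real) \<Rightarrow> real \<Rightarrow> real" where
  "aliased f l = f l + (\<Sum>n. alias_pair f l n)"

(* The constant sum_{n>=0} 1/(n+1)^2 that controls all aliasing errors. *)
definition inv_sq_sum :: real where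
  "inv_sq_sum = (\<Sum>n. 1 / (real n + 1)\<^sup>2)"

lemma summable_inv_sq: "summable (\<lambda>n. c / (real n + 1)\<^sup>2)"
proof -
  have "summable (\<lambda>n. inverse (real (Suc n) ^ 2))"
    using inverse_power_summable[of 2, where 'a=real] by (subst summable_Suc_iff) simp
  thus ?thesis using summable_mult[of _ c] by (simp add: divide_inverse add.commute)
qed

lemma suminf_inv_sq: "(\<Sum>n. c / (real n + 1)\<^sup>2) = c * inv_sq_sum"
  unfolding inv_sq_sum_def using suminf_mult[OF summable_inv_sq[of 1], of c] by simp

lemma inv_sq_sum_nonneg: "inv_sq_sum \<ge> 0"
  unfolding inv_sq_sum_def by (rule suminf_nonneg[OF summable_inv_sq]) simp

lemma alias_abscissa_bounds:
  assumes "\<bar>l\<bar> \<le> pi"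
  shows "real n + 1 \<le> \<bar>l + 2 * (real n + 1) * pi\<bar>" "real n + 1 \<le> \<bar>l - 2 * (real n + 1) * pi\<bar>"
    "\<bar>l\<bar> \<le> \<bar>l + 2 * (real n + 1) * pi\<bar>" "\<bar>l\<bar> \<le> \<bar>l - 2 * (real n + 1) * pi\<bar>"
proof -
  have "real n + 1 \<le> (real n + 1) * pi" using mult_left_mono[of 1 pi "real n + 1"] pi_gt3 by simp
  moreover have "pi \<le> (real n + 1) * pi" by simp
  ultimately show "real n + 1 \<le> \<bar>l + 2 * (real n + 1) * pi\<bar>" "real n + 1 \<le> \<bar>l - 2 * (real n + 1) * pi\<bar>"
    "\<bar>l\<bar> \<le> \<bar>l + 2 * (real n + 1) * pi\<bar>" "\<bar>l\<bar> \<le> \<bar>l - 2 * (real n + 1) * pi\<bar>"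
    using assms by linarith+
qed

lemma alias_pair_g_star_bounds:
  assumes "\<nu> \<ge> 1/2" "\<alpha> > 0" "\<bar>l\<bar> \<le> pi"
  shows "0 \<le> alias_pair (g_star \<nu> \<alpha>) l n"
    "alias_pair (g_star \<nu> \<alpha>) l n \<le> 2 * C_nu \<nu> * \<alpha> powr (2*\<nu>) / (real n + 1)\<^sup>2"
proof -
  show "0 \<le> alias_pair (g_star \<nu> \<alpha>) l n"
    unfolding alias_pair_def using g_star_pos[of \<nu> \<alpha>] assms by (simp add: less_imp_le)
  have "g_star \<nu> \<alpha> (l + 2 * (real n + 1) * pi) \<le> C_nu \<nu> * \<alpha> powr (2*\<nu>) / (real n + 1)\<^sup>2"
    "g_star \<nu> \<alpha> (l - 2 * (real n + 1) * pi) \<le> C_nu \<nu> * \<alpha> powr (2*\<nu>) / (real n + 1)\<^sup>2"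
    by (rule g_star_tail_le; use assms alias_abscissa_bounds[OF assms(3)] in simp)+
  thus "alias_pair (g_star \<nu> \<alpha>) l n \<le> 2 * C_nu \<nu> * \<alpha> powr (2*\<nu>) / (real n + 1)\<^sup>2"
    unfolding alias_pair_def by simp
qed

lemma alias_pair_w_star_bounds:
  assumes "\<nu> \<ge> 1/2" "\<alpha> > 0" "\<bar>l\<bar> \<le> pi"
  shows "0 \<le> alias_pair (w_star \<nu> \<alpha>) l n"
    "alias_pair (w_star \<nu> \<alpha>) l n \<le> \<alpha>\<^sup>2 / (\<alpha>\<^sup>2 + l\<^sup>2) * alias_pair (g_star \<nu> \<alpha>) l n"
proof -
  have "\<nu> > 0" using assms by simp
  note plus = w_star_bounds[OF this assms(2) alias_abscissa_bounds(3)[OF assms(3), of n]]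
   and minus = w_star_bounds[OF this assms(2) alias_abscissa_bounds(4)[OF assms(3), of n]]
  show "0 \<le> alias_pair (w_star \<nu> \<alpha>) l n" unfolding alias_pair_def using plus minus by simp
  show "alias_pair (w_star \<nu> \<alpha>) l n \<le> \<alpha>\<^sup>2 / (\<alpha>\<^sup>2 + l\<^sup>2) * alias_pair (g_star \<nu> \<alpha>) l n"
    unfolding alias_pair_def using plus minus by (simp add: distrib_left)
qed

lemma alias_pair_w_star_le:
  assumes "\<nu> \<ge> 1/2" "\<alpha> > 0" "\<bar>l\<bar> \<le> pi"
  shows "alias_pair (w_star \<nu> \<alpha>) l n \<le> alias_pair (g_star \<nu> \<alpha>) l n"
proof -
  have "\<alpha>\<^sup>2 / (\<alpha>\<^sup>2 + l\<^sup>2) \<le> 1" using assms by (simp add: add_pos_nonneg)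
  from mult_right_mono[OF this alias_pair_g_star_bounds(1)[OF assms, of n]]
  show ?thesis using alias_pair_w_star_bounds(2)[OF assms, of n] by simp
qed

lemma summable_alias_pair_g_star:
  assumes "\<nu> \<ge> 1/2" "\<alpha> > 0" "\<bar>l\<bar> \<le> pi"
  shows "summable (alias_pair (g_star \<nu> \<alpha>) l)"
  by (rule summable_comparison_test'[OF summable_inv_sq[of "2 * C_nu \<nu> * \<alpha> powr (2*\<nu>)"], of 0])
     (use alias_pair_g_star_bounds[OF assms] in simp)

lemma summable_alias_pair_w_star:
  assumes "\<nu> \<ge> 1/2" "\<alpha> > 0" "\<bar>l\<bar> \<le> pi"
  shows "summable (alias_pair (w_star \<nu> \<alpha>) l)"
  by (rule summable_comparison_test'[OF summable_alias_pair_g_star[OF assms], of 0])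
     (use alias_pair_w_star_bounds(1)[OF assms] alias_pair_w_star_le[OF assms] in simp)

lemma g_delta_eq_aliased:
  assumes "\<nu> \<ge> 1/2" "\<delta> * \<theta> > 0" "\<bar>l\<bar> \<le> pi"
  shows "g_delta \<nu> \<delta> \<theta> l = aliased (g_star \<nu> (\<delta>*\<theta>)) l"
proof -
  define f where "f k = g_star \<nu> (\<delta>*\<theta>) (l + 2 * of_int k * pi)" for k :: int
  have pairs: "(\<lambda>n. f (int n + 1) + f (-(int n + 1))) = alias_pair (g_star \<nu> (\<delta>*\<theta>)) l"
    by (simp add: fun_eq_iff f_def alias_pair_def algebra_simps)
  have "\<nu> > 0" using assms by simp
  have "infsum f UNIV = f 0 + (\<Sum>n. f (int n + 1) + f (-(int n + 1)))"
  proof (rule infsum_int_symmetric_pairs)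
    show "f k \<ge> 0" for k using g_star_pos[OF \<open>\<nu> > 0\<close> assms(2)] by (simp add: f_def less_imp_le)
    show "summable (\<lambda>n. f (int n + 1) + f (-(int n + 1)))"
      unfolding pairs by (rule summable_alias_pair_g_star[OF assms])
  qed
  moreover have "infsum f UNIV = g_delta \<nu> \<delta> \<theta> l" unfolding g_delta_def f_def ..
  ultimately show ?thesis unfolding aliased_def pairs by (simp add: f_def)
qed

lemma aliased_g_star_bounds:
  assumes "\<nu> \<ge> 1/2" "\<alpha> > 0" "\<bar>l\<bar> \<le> pi"
  shows "g_star \<nu> \<alpha> l \<le> aliased (g_star \<nu> \<alpha>) l"
    "aliased (g_star \<nu> \<alpha>) l \<le> g_star \<nu> \<alpha> l + 2 * C_nu \<nu> * \<alpha> powr (2*\<nu>) * inv_sq_sum"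
    "0 < aliased (g_star \<nu> \<alpha>) l"
proof -
  note sums = summable_alias_pair_g_star[OF assms] and bounds = alias_pair_g_star_bounds[OF assms]
  have "0 \<le> (\<Sum>n. alias_pair (g_star \<nu> \<alpha>) l n)" by (rule suminf_nonneg[OF sums]) (use bounds in auto)
  thus "g_star \<nu> \<alpha> l \<le> aliased (g_star \<nu> \<alpha>) l" unfolding aliased_def by simp
  thus "0 < aliased (g_star \<nu> \<alpha>) l" using g_star_pos[of \<nu> \<alpha> l] assms by simp
  have "(\<Sum>n. alias_pair (g_star \<nu> \<alpha>) l n) \<le> (\<Sum>n. 2 * C_nu \<nu> * \<alpha> powr (2*\<nu>) / (real n + 1)\<^sup>2)"
    by (rule suminf_le) (use bounds sums summable_inv_sq in auto)
  also have "\<dots> = 2 * C_nu \<nu> * \<alpha> powr (2*\<nu>) * inv_sq_sum"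
    by (rule suminf_inv_sq)
  finally show "aliased (g_star \<nu> \<alpha>) l \<le> g_star \<nu> \<alpha> l + 2 * C_nu \<nu> * \<alpha> powr (2*\<nu>) * inv_sq_sum"
    unfolding aliased_def by simp
qed

lemma aliased_w_star_bounds:
  assumes "\<nu> \<ge> 1/2" "\<alpha> > 0" "\<bar>l\<bar> \<le> pi"
  shows "w_star \<nu> \<alpha> l \<le> aliased (w_star \<nu> \<alpha>) l"
    "aliased (w_star \<nu> \<alpha>) l \<le> \<alpha>\<^sup>2 / (\<alpha>\<^sup>2 + l\<^sup>2) * aliased (g_star \<nu> \<alpha>) l"
proof -
  note sw = summable_alias_pair_w_star[OF assms] and sg = summable_alias_pair_g_star[OF assms]
  have "0 \<le> (\<Sum>n. alias_pair (w_star \<nu> \<alpha>) l n)"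
    by (rule suminf_nonneg[OF sw]) (use alias_pair_w_star_bounds(1)[OF assms] in auto)
  thus "w_star \<nu> \<alpha> l \<le> aliased (w_star \<nu> \<alpha>) l" unfolding aliased_def by simp
  have "(\<Sum>n. alias_pair (w_star \<nu> \<alpha>) l n) \<le> (\<Sum>n. \<alpha>\<^sup>2 / (\<alpha>\<^sup>2 + l\<^sup>2) * alias_pair (g_star \<nu> \<alpha>) l n)"
    by (rule suminf_le) (use alias_pair_w_star_bounds(2)[OF assms] sw sg in \<open>auto intro!: summable_mult\<close>)
  also have "\<dots> = \<alpha>\<^sup>2 / (\<alpha>\<^sup>2 + l\<^sup>2) * (\<Sum>n. alias_pair (g_star \<nu> \<alpha>) l n)"
    by (rule suminf_mult[OF sg])
  moreover have "w_star \<nu> \<alpha> l = \<alpha>\<^sup>2 / (\<alpha>\<^sup>2 + l\<^sup>2) * g_star \<nu> \<alpha> l"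
    by (simp add: w_star_def)
  ultimately show "aliased (w_star \<nu> \<alpha>) l \<le> \<alpha>\<^sup>2 / (\<alpha>\<^sup>2 + l\<^sup>2) * aliased (g_star \<nu> \<alpha>) l"
    unfolding aliased_def distrib_left by linarith
qed

lemma continuous_on_aliased:
  assumes cont: "\<And>\<omega>. isCont f \<omega>"
    and major: "\<And>l n. l \<in> {-pi..pi} \<Longrightarrow> \<bar>alias_pair f l n\<bar> \<le> M n" and "summable M"
  shows "continuous_on {-pi..pi} (aliased f)"
proof -
  have cont_on: "continuous_on A f" for A by (intro continuous_at_imp_continuous_on ballI cont)
  have "continuous_on {-pi..pi} (\<lambda>l. alias_pair f l n)" for n
    unfolding alias_pair_def
    by (intro continuous_intros continuous_on_compose2[OF cont_on[of UNIV]]) auto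
  moreover have "uniform_limit {-pi..pi} (\<lambda>n l. \<Sum>i<n. alias_pair f l i) (\<lambda>l. \<Sum>i. alias_pair f l i) sequentially"
    by (rule Weierstrass_m_test) (use major \<open>summable M\<close> in auto)
  ultimately have "continuous_on {-pi..pi} (\<lambda>l. \<Sum>i. alias_pair f l i)"
    by (intro uniform_limit_theorem[OF _ \<open>uniform_limit _ _ _ _\<close>]) (auto intro!: always_eventually continuous_on_sum)
  thus ?thesis unfolding aliased_def[abs_def] by (intro continuous_on_add cont_on)
qed

lemma continuous_on_aliased_g_star:
  assumes "\<nu> \<ge> 1/2" "\<alpha> > 0"
  shows "continuous_on {-pi..pi} (aliased (g_star \<nu> \<alpha>))"
  by (rule continuous_on_aliased[OF isCont_g_star[OF assms(2)] _
        summable_inv_sq[of "2 * C_nu \<nu> * \<alpha> powr (2*\<nu>)"]])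
     (use alias_pair_g_star_bounds[OF assms] in auto)

lemma continuous_on_aliased_w_star:
  assumes "\<nu> \<ge> 1/2" "\<alpha> > 0"
  shows "continuous_on {-pi..pi} (aliased (w_star \<nu> \<alpha>))"
proof (rule continuous_on_aliased[OF isCont_w_star[OF assms(2)] _
      summable_inv_sq[of "2 * C_nu \<nu> * \<alpha> powr (2*\<nu>)"]])
  fix l n assume "l \<in> {-pi..pi}"
  hence l: "\<bar>l\<bar> \<le> pi" by auto
  show "\<bar>alias_pair (w_star \<nu> \<alpha>) l n\<bar> \<le> 2 * C_nu \<nu> * \<alpha> powr (2*\<nu>) / (real n + 1)\<^sup>2"
    using alias_pair_w_star_bounds(1)[OF assms l, of n]
      order_trans[OF alias_pair_w_star_le[OF assms l] alias_pair_g_star_bounds(2)[OF assms l]] by simp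
qed

lemma has_real_derivative_alias_pair:
  assumes "\<delta> > 0" "t > 0"
  shows "((\<lambda>t. alias_pair (g_star \<nu> (\<delta>*t)) l n) has_real_derivative
     2*\<nu>/t * alias_pair (g_star \<nu> (\<delta>*t)) l n - (2*\<nu>+1)/t * alias_pair (w_star \<nu> (\<delta>*t)) l n) (at t)"
proof -
  note plus = has_real_derivative_g_star_scale[OF assms, of \<nu> "l + 2 * (real n + 1) * pi"]
   and minus = has_real_derivative_g_star_scale[OF assms, of \<nu> "l - 2 * (real n + 1) * pi"]
  show ?thesis
    unfolding alias_pair_def using DERIV_add[OF plus minus] by (simp add: algebra_simps)
qed

lemma alias_pair_derivative_bound:
  assumes nu: "\<nu> \<ge> 1/2" and d: "\<delta> > 0" and th: "\<theta> > 0" and l: "\<bar>l\<bar> \<le> pi"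
    and t: "t \<in> {\<theta>/2..2*\<theta>}"
  shows "\<bar>2*\<nu>/t * alias_pair (g_star \<nu> (\<delta>*t)) l n - (2*\<nu>+1)/t * alias_pair (w_star \<nu> (\<delta>*t)) l n\<bar>
         \<le> (4*\<nu>+1) * (2/\<theta>) * (2 * C_nu \<nu> * (2*\<delta>*\<theta>) powr (2*\<nu>)) / (real n + 1)\<^sup>2"
proof -
  have t_pos: "t > 0" and "1/t \<le> 2/\<theta>" using t th by (auto simp: field_simps)
  have a: "\<delta>*t > 0" using d t_pos by simp
  define P where "P = alias_pair (g_star \<nu> (\<delta>*t)) l n"
  define W where "W = alias_pair (w_star \<nu> (\<delta>*t)) l n"
  have P: "0 \<le> P" "P \<le> 2 * C_nu \<nu> * (\<delta>*t) powr (2*\<nu>) / (real n + 1)\<^sup>2"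
    unfolding P_def by (rule alias_pair_g_star_bounds[OF nu a l])+
  have W: "0 \<le> W" "W \<le> P"
    unfolding W_def P_def by (rule alias_pair_w_star_bounds(1)[OF nu a l], rule alias_pair_w_star_le[OF nu a l])
  have abs_diff: "\<bar>a - b\<bar> \<le> a + c" if "0 \<le> a" "0 \<le> b" "b \<le> c" for a b c :: real
    using that by linarith
  have "\<bar>2*\<nu>/t * P - (2*\<nu>+1)/t * W\<bar> \<le> 2*\<nu>/t * P + (2*\<nu>+1)/t * P"
    using P W t_pos nu by (intro abs_diff mult_left_mono) auto
  also have "\<dots> = (4*\<nu>+1)/t * P" using t_pos by (simp add: field_simps)
  also have "\<dots> \<le> (4*\<nu>+1) * (2/\<theta>) * P"
  proof -
    have "(4*\<nu>+1)/t = (4*\<nu>+1) * (1/t)" by simp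
    also have "\<dots> \<le> (4*\<nu>+1) * (2/\<theta>)" using \<open>1/t \<le> 2/\<theta>\<close> nu by (intro mult_left_mono) auto
    finally show ?thesis using P(1) by (rule mult_right_mono)
  qed
  also have "\<dots> \<le> (4*\<nu>+1) * (2/\<theta>) * (2 * C_nu \<nu> * (2*\<delta>*\<theta>) powr (2*\<nu>) / (real n + 1)\<^sup>2)"
  proof -
    have "(\<delta>*t) powr (2*\<nu>) \<le> (2*\<delta>*\<theta>) powr (2*\<nu>)"
      using t d nu by (intro powr_mono2) auto
    hence "2 * C_nu \<nu> * (\<delta>*t) powr (2*\<nu>) / (real n + 1)\<^sup>2
           \<le> 2 * C_nu \<nu> * (2*\<delta>*\<theta>) powr (2*\<nu>) / (real n + 1)\<^sup>2"
      using C_nu_pos[of \<nu>] nu by (intro divide_right_mono mult_left_mono) auto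
    hence "P \<le> 2 * C_nu \<nu> * (2*\<delta>*\<theta>) powr (2*\<nu>) / (real n + 1)\<^sup>2"
      using P(2) by linarith
    thus ?thesis using nu th by (intro mult_left_mono) auto
  qed
  finally show ?thesis unfolding P_def W_def by simp
qed

lemma has_real_derivative_g_delta:
  assumes nu: "\<nu> \<ge> 1/2" and d: "\<delta> > 0" and th: "\<theta> > 0" and l: "\<bar>l\<bar> \<le> pi"
  shows "((\<lambda>t. g_delta \<nu> \<delta> t l) has_real_derivative
     2*\<nu>/\<theta> * aliased (g_star \<nu> (\<delta>*\<theta>)) l - (2*\<nu>+1)/\<theta> * aliased (w_star \<nu> (\<delta>*\<theta>)) l) (at \<theta>)"
proof -
  define S where "S = {\<theta>/2..2*\<theta>}"
  define f where "f n t = alias_pair (g_star \<nu> (\<delta>*t)) l n" for n t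
  define f' where "f' n t = 2*\<nu>/t * f n t - (2*\<nu>+1)/t * alias_pair (w_star \<nu> (\<delta>*t)) l n" for n t
  have S: "convex S" "\<theta> \<in> S" "\<theta> \<in> interior S" using th by (auto simp: S_def)
  have "(f n has_field_derivative f' n t) (at t within S)" if "t \<in> S" for n t
    using has_real_derivative_alias_pair[OF d, of t \<nu> l n] that th
    by (auto simp: S_def f_def[abs_def] f'_def intro: has_field_derivative_at_within)
  moreover have "uniformly_convergent_on S (\<lambda>n t. \<Sum>i<n. f' i t)"
    by (rule Weierstrass_m_test'[OF _ summable_inv_sq[of "(4*\<nu>+1) * (2/\<theta>) * (2 * C_nu \<nu> * (2*\<delta>*\<theta>) powr (2*\<nu>))"]])
       (use alias_pair_derivative_bound[OF nu d th l] in \<open>auto simp: S_def f_def f'_def\<close>)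
  moreover have "summable (\<lambda>n. f n \<theta>)"
    unfolding f_def using summable_alias_pair_g_star[OF nu _ l] d th by simp
  ultimately have series: "((\<lambda>t. \<Sum>n. f n t) has_field_derivative (\<Sum>n. f' n \<theta>)) (at \<theta>)"
    using has_field_derivative_series'(2)[OF S(1) _ _ S(2)] S(3) by blast
  have "eventually (\<lambda>t. t \<in> {0<..}) (nhds \<theta>)" using th by (intro eventually_nhds_in_open) auto
  hence locally_aliased: "eventually (\<lambda>t. g_star \<nu> (\<delta>*t) l + (\<Sum>n. f n t) = g_delta \<nu> \<delta> t l) (nhds \<theta>)"
    by eventually_elim (use g_delta_eq_aliased[OF nu _ l] d in \<open>simp add: aliased_def f_def[abs_def]\<close>)
  have sum_rule: "((\<lambda>t. g_star \<nu> (\<delta>*t) l + (\<Sum>n. f n t)) has_field_derivative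
      (2*\<nu>/\<theta> * g_star \<nu> (\<delta>*\<theta>) l - (2*\<nu>+1)/\<theta> * w_star \<nu> (\<delta>*\<theta>) l) + (\<Sum>n. f' n \<theta>)) (at \<theta>)"
    by (rule DERIV_add[OF has_real_derivative_g_star_scale[OF d th] series])
  have series_value: "(\<Sum>n. f' n \<theta>) = 2*\<nu>/\<theta> * (\<Sum>n. alias_pair (g_star \<nu> (\<delta>*\<theta>)) l n)
                                  - (2*\<nu>+1)/\<theta> * (\<Sum>n. alias_pair (w_star \<nu> (\<delta>*\<theta>)) l n)"
  proof -
    have dt: "\<delta>*\<theta> > 0" using d th by simp
    note sg = summable_alias_pair_g_star[OF nu dt l] and sw = summable_alias_pair_w_star[OF nu dt l]
    show ?thesis
      unfolding f'_def f_def suminf_diff[OF summable_mult[OF sg] summable_mult[OF sw], symmetric]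
      by (simp only: suminf_mult[OF sg] suminf_mult[OF sw])
  qed
  have "((\<lambda>t. g_star \<nu> (\<delta>*t) l + (\<Sum>n. f n t)) has_field_derivative
      2*\<nu>/\<theta> * aliased (g_star \<nu> (\<delta>*\<theta>)) l - (2*\<nu>+1)/\<theta> * aliased (w_star \<nu> (\<delta>*\<theta>)) l) (at \<theta>)"
    using sum_rule by (rule DERIV_cong) (simp add: series_value aliased_def algebra_simps)
  thus ?thesis using DERIV_cong_ev[OF refl locally_aliased refl] by simp
qed

lemma h_delta_eq:
  assumes nu: "\<nu> \<ge> 1/2" and d: "\<delta> > 0" and th: "\<theta> > 0" and l: "\<bar>l\<bar> \<le> pi"
  shows "h_delta \<nu> \<delta> \<theta> l = 2*\<nu>/\<theta> - (2*\<nu>+1)/\<theta> * (aliased (w_star \<nu> (\<delta>*\<theta>)) l / aliased (g_star \<nu> (\<delta>*\<theta>)) l)"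
proof -
  have dt: "\<delta>*\<theta> > 0" using d th by simp
  define G where "G = aliased (g_star \<nu> (\<delta>*\<theta>)) l"
  have G: "G > 0" "g_delta \<nu> \<delta> \<theta> l = G"
    unfolding G_def by (rule aliased_g_star_bounds(3)[OF nu dt l], rule g_delta_eq_aliased[OF nu dt l])
  have cancel: "1 / G * (a * G - b * N) = a - b * (N / G)" if "G > 0" for a b N G :: real
    using that by (simp add: field_simps)
  have "((\<lambda>t. ln (g_delta \<nu> \<delta> t l)) has_real_derivative
      1 / G * (2*\<nu>/\<theta> * G - (2*\<nu>+1)/\<theta> * aliased (w_star \<nu> (\<delta>*\<theta>)) l)) (at \<theta>)"
    using DERIV_chain2[OF DERIV_ln_divide has_real_derivative_g_delta[OF nu d th l]] G
    unfolding G_def by simp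
  hence "h_delta \<nu> \<delta> \<theta> l = 1 / G * (2*\<nu>/\<theta> * G - (2*\<nu>+1)/\<theta> * aliased (w_star \<nu> (\<delta>*\<theta>)) l)"
    unfolding h_delta_def by (rule DERIV_imp_deriv)
  also have "\<dots> = 2*\<nu>/\<theta> - (2*\<nu>+1)/\<theta> * (aliased (w_star \<nu> (\<delta>*\<theta>)) l / G)"
    by (rule cancel) (rule G(1))
  finally show ?thesis unfolding G_def .
qed

(* Representation of I4 through the aliased sums G, N at alpha = delta theta0. The sigma4
   integrand is governed by the squared ratio below. *)
definition score_sq :: "real \<Rightarrow> real \<Rightarrow> real \<Rightarrow> real \<Rightarrow> real" where
  "score_sq \<nu> b \<alpha> l = (b * aliased (w_star \<nu> \<alpha>) l / (b * aliased (g_star \<nu> \<alpha>) l + 1/(2*pi)))\<^sup>2"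

lemma continuous_on_score_sq:
  assumes "\<nu> \<ge> 1/2" "b > 0" "\<alpha> > 0"
  shows "continuous_on {-pi..pi} (score_sq \<nu> b \<alpha>)"
proof -
  have "b * aliased (g_star \<nu> \<alpha>) l + 1/(2*pi) > 0" if "l \<in> {-pi..pi}" for l
    using aliased_g_star_bounds(3)[OF assms(1,3), of l] assms(2) that
    by (intro add_pos_pos mult_pos_pos) auto
  thus ?thesis unfolding score_sq_def[abs_def]
    by (intro continuous_intros continuous_on_aliased_g_star continuous_on_aliased_w_star assms)
       (auto simp: less_imp_neq[symmetric])
qed

lemma v1_integrand_eq:
  assumes nu: "\<nu> \<ge> 1/2" and b: "b > 0" and dt: "\<delta>*\<theta> > 0" and l: "\<bar>l\<bar> \<le> pi"
  shows "(a_delta \<nu> \<delta> b \<theta> l) powi (-2) * (g_delta \<nu> \<delta> \<theta> l)\<^sup>2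
         = (1/b\<^sup>2) * (b * aliased (g_star \<nu> (\<delta>*\<theta>)) l + 1/(2*pi))\<^sup>2"
proof -
  define G where "G = aliased (g_star \<nu> (\<delta>*\<theta>)) l"
  have G: "G > 0" "g_delta \<nu> \<delta> \<theta> l = G"
    unfolding G_def by (rule aliased_g_star_bounds(3)[OF nu dt l], rule g_delta_eq_aliased[OF nu dt l])
  have "b * G + 1/(2*pi) > 0" using b G by (simp add: add_pos_pos)
  thus ?thesis
    unfolding a_delta_def G(2) G_def[symmetric] using b G
    by (simp add: power_int_minus power_divide field_simps power2_eq_square)
qed

lemma sigma4_integrand_eq:
  assumes nu: "\<nu> \<ge> 1/2" and b: "b > 0" and d: "\<delta> > 0" and th: "\<theta> > 0" and l: "\<bar>l\<bar> \<le> pi"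
  shows "(a_delta \<nu> \<delta> b \<theta> l)\<^sup>2 * (h_delta \<nu> \<delta> \<theta> l - 2*\<nu>/\<theta>)\<^sup>2
         = ((2*\<nu>+1)/\<theta>)\<^sup>2 * score_sq \<nu> b (\<delta>*\<theta>) l"
proof -
  have dt: "\<delta>*\<theta> > 0" using d th by simp
  define G where "G = aliased (g_star \<nu> (\<delta>*\<theta>)) l"
  define N where "N = aliased (w_star \<nu> (\<delta>*\<theta>)) l"
  define c :: real where "c = 1/(2*pi)"
  have G: "G > 0" "g_delta \<nu> \<delta> \<theta> l = G"
    unfolding G_def by (rule aliased_g_star_bounds(3)[OF nu dt l], rule g_delta_eq_aliased[OF nu dt l])
  have a: "a_delta \<nu> \<delta> b \<theta> l = b * G / (b * G + c)" unfolding a_delta_def G(2) c_def ..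
  have h: "h_delta \<nu> \<delta> \<theta> l - 2*\<nu>/\<theta> = - ((2*\<nu>+1)/\<theta> * (N / G))"
    unfolding N_def G_def using h_delta_eq[OF nu d th l] by simp
  have "b * G + c > 0" using b G by (simp add: c_def add_pos_pos)
  hence ratio: "b * G / (b * G + c) * (N / G) = b * N / (b * G + c)" using G by (simp add: field_simps)
  have "x\<^sup>2 * (-(k * y))\<^sup>2 = k\<^sup>2 * (x * y)\<^sup>2" for x k y :: real by (simp add: power2_eq_square algebra_simps)
  hence "(b * G / (b * G + c))\<^sup>2 * (- ((2*\<nu>+1)/\<theta> * (N / G)))\<^sup>2 = ((2*\<nu>+1)/\<theta>)\<^sup>2 * (b * N / (b * G + c))\<^sup>2"
    unfolding ratio[symmetric] .
  thus ?thesis unfolding a h score_sq_def N_def[symmetric] G_def[symmetric] c_def[symmetric] .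
qed

lemma I4_eq:
  assumes nu: "\<nu> \<ge> 1/2" and b: "b > 0" and d: "\<delta> > 0" and th: "\<theta> > 0"
  shows "I4 \<nu> \<delta> b \<theta> = ((2*\<nu>+1)/(2*\<nu>))\<^sup>2 / b\<^sup>2 *
     ((\<delta>*\<theta>) * integral {-pi..pi} (\<lambda>l. (b * aliased (g_star \<nu> (\<delta>*\<theta>)) l + 1/(2*pi))\<^sup>2)) *
     (integral {-pi..pi} (score_sq \<nu> b (\<delta>*\<theta>)) / (\<delta>*\<theta>))"
proof -
  define \<alpha> where "\<alpha> = \<delta>*\<theta>"
  have a: "\<alpha> > 0" unfolding \<alpha>_def using d th by simp
  define V where "V = integral {-pi..pi} (\<lambda>l. (b * aliased (g_star \<nu> \<alpha>) l + 1/(2*pi))\<^sup>2)"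
  define S where "S = integral {-pi..pi} (score_sq \<nu> b \<alpha>)"
  have "v1 \<nu> \<delta> b \<theta> = b\<^sup>2 * integral {-pi..pi} (\<lambda>l. (1/b\<^sup>2) * (b * aliased (g_star \<nu> \<alpha>) l + 1/(2*pi))\<^sup>2)"
    unfolding v1_def \<alpha>_def using v1_integrand_eq[OF nu b] a unfolding \<alpha>_def
    by (intro arg_cong[where f="\<lambda>x. b\<^sup>2 * x"] integral_cong) auto
  hence v1: "v1 \<nu> \<delta> b \<theta> = V" unfolding V_def integral_cmult_real using b by simp
  have "sigma4_sq \<nu> \<delta> b \<theta> = b\<^sup>2 * (2*\<nu>/\<theta>)\<^sup>2 * inverse (integral {-pi..pi} (\<lambda>l. ((2*\<nu>+1)/\<theta>)\<^sup>2 * score_sq \<nu> b \<alpha> l))"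
    unfolding sigma4_sq_def \<alpha>_def using sigma4_integrand_eq[OF nu b d th]
    by (intro arg_cong[where f="\<lambda>x. b\<^sup>2 * (2*\<nu>/\<theta>)\<^sup>2 * inverse x"] integral_cong) auto
  hence sigma4: "sigma4_sq \<nu> \<delta> b \<theta> = b\<^sup>2 * (2*\<nu>/\<theta>)\<^sup>2 * inverse (((2*\<nu>+1)/\<theta>)\<^sup>2 * S)"
    unfolding S_def integral_cmult_real .
  have "I4 \<nu> \<delta> b \<theta> = ((2*\<nu>+1)/(2*\<nu>))\<^sup>2 / b\<^sup>2 * (\<alpha> * V) * (S / \<alpha>)"
    unfolding I4_def v1 sigma4 using a b th nu by (cases "S = 0") (simp_all add: field_simps power2_eq_square)
  thus ?thesis unfolding \<alpha>_def V_def S_def .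
qed

lemma integral_g_star_le:
  assumes nu: "\<nu> \<ge> 1/2" and a: "\<alpha> > 0"
  shows "integral {-pi..pi} (g_star \<nu> \<alpha>) \<le> C_nu \<nu> * Beta (1/2) \<nu>"
proof -
  have "trunc \<alpha> (\<lambda>u. g_star \<nu> \<alpha> (\<alpha>*u)) = (\<lambda>u. C_nu \<nu> / \<alpha> * trunc \<alpha> (kern (\<nu>+1/2)) u)"
    by (simp add: fun_eq_iff trunc_def g_star_rescaled[OF a])
  hence "integral {-pi..pi} (g_star \<nu> \<alpha>) = C_nu \<nu> * integral UNIV (trunc \<alpha> (kern (\<nu>+1/2)))"
    using integral_rescale(2)[OF a continuous_on_g_star[OF a]] a by (simp add: integral_cmult_real)
  also have "\<dots> \<le> C_nu \<nu> * integral UNIV (kern (\<nu>+1/2))"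
    using nu C_nu_pos[of \<nu>] kern_integrable[of "\<nu>+1/2"] kern_pos
    by (intro mult_left_mono integral_trunc_le) (auto intro: less_imp_le)
  finally show ?thesis using integral_kern[of "\<nu>+1/2"] nu by simp
qed

lemma scaled_integral_g_star_sq:
  assumes a: "\<alpha> > 0"
  shows "\<alpha> * integral {-pi..pi} (\<lambda>l. (g_star \<nu> \<alpha> l)\<^sup>2) = (C_nu \<nu>)\<^sup>2 * integral UNIV (trunc \<alpha> (kern (2*\<nu>+1)))"
proof -
  have "(g_star \<nu> \<alpha> (\<alpha>*u))\<^sup>2 = (C_nu \<nu>)\<^sup>2 / \<alpha>\<^sup>2 * kern (2*\<nu>+1) u" for u
    using kern_square[of "\<nu>+1/2" u]
    by (simp add: g_star_rescaled[OF a] power_mult_distrib power_divide algebra_simps)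
  hence "trunc \<alpha> (\<lambda>u. (g_star \<nu> \<alpha> (\<alpha>*u))\<^sup>2) = (\<lambda>u. (C_nu \<nu>)\<^sup>2 / \<alpha>\<^sup>2 * trunc \<alpha> (kern (2*\<nu>+1)) u)"
    by (simp add: fun_eq_iff trunc_def)
  moreover have "continuous_on {-pi..pi} (\<lambda>l. (g_star \<nu> \<alpha> l)\<^sup>2)"
    by (intro continuous_intros continuous_on_g_star[OF a])
  ultimately show ?thesis
    using integral_rescale(2)[of \<alpha> "\<lambda>l. (g_star \<nu> \<alpha> l)\<^sup>2"] a
    by (simp add: integral_cmult_real power2_eq_square)
qed

(* For alpha < 1 the aliased density exceeds g* by at most a constant (with the 1/(2 pi) shift). *)
definition alias_excess :: "real \<Rightarrow> real \<Rightarrow> real" where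
  "alias_excess \<nu> b = b * (2 * C_nu \<nu> * inv_sq_sum) + 1/(2*pi)"

lemma alias_excess_bounds:
  assumes nu: "\<nu> \<ge> 1/2" and b: "b > 0" and a: "0 < \<alpha>" "\<alpha> < 1" and l: "\<bar>l\<bar> \<le> pi"
  shows "b * g_star \<nu> \<alpha> l \<le> b * aliased (g_star \<nu> \<alpha>) l + 1/(2*pi)"
    "b * aliased (g_star \<nu> \<alpha>) l + 1/(2*pi) \<le> b * g_star \<nu> \<alpha> l + alias_excess \<nu> b"
proof -
  note G = aliased_g_star_bounds[OF nu a(1) l]
  have "b * g_star \<nu> \<alpha> l \<le> b * aliased (g_star \<nu> \<alpha>) l"
    using mult_left_mono[OF G(1), of b] b by simp
  moreover have "0 < 1/(2*pi)" by simp
  ultimately show "b * g_star \<nu> \<alpha> l \<le> b * aliased (g_star \<nu> \<alpha>) l + 1/(2*pi)" by linarith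
  have "\<alpha> powr (2*\<nu>) \<le> 1" using powr_mono2[of "2*\<nu>" \<alpha> 1] a nu by simp
  hence "\<alpha> powr (2*\<nu>) * inv_sq_sum \<le> inv_sq_sum"
    by (intro mult_left_le_one_le inv_sq_sum_nonneg) auto
  hence "2 * C_nu \<nu> * \<alpha> powr (2*\<nu>) * inv_sq_sum \<le> 2 * C_nu \<nu> * inv_sq_sum"
    using C_nu_pos[of \<nu>] nu by (simp add: mult.assoc)
  hence "aliased (g_star \<nu> \<alpha>) l \<le> g_star \<nu> \<alpha> l + 2 * C_nu \<nu> * inv_sq_sum" using G(2) by linarith
  hence "b * aliased (g_star \<nu> \<alpha>) l \<le> b * (g_star \<nu> \<alpha> l + 2 * C_nu \<nu> * inv_sq_sum)"
    using b by (intro mult_left_mono) auto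
  thus "b * aliased (g_star \<nu> \<alpha>) l + 1/(2*pi) \<le> b * g_star \<nu> \<alpha> l + alias_excess \<nu> b"
    unfolding alias_excess_def by (simp add: algebra_simps)
qed

lemma alias_excess_nonneg: "\<nu> > 0 \<Longrightarrow> b > 0 \<Longrightarrow> alias_excess \<nu> b \<ge> 0"
  unfolding alias_excess_def using C_nu_pos[of \<nu>] inv_sq_sum_nonneg by simp

lemma integral_alias_excess_bounds:
  assumes nu: "\<nu> \<ge> 1/2" and b: "b > 0" and a: "0 < \<alpha>" "\<alpha> < 1"
  defines "E \<equiv> alias_excess \<nu> b"
  shows "0 \<le> integral {-pi..pi} (\<lambda>l. (b * aliased (g_star \<nu> \<alpha>) l + 1/(2*pi))\<^sup>2 - b\<^sup>2 * (g_star \<nu> \<alpha> l)\<^sup>2)"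
    "integral {-pi..pi} (\<lambda>l. (b * aliased (g_star \<nu> \<alpha>) l + 1/(2*pi))\<^sup>2 - b\<^sup>2 * (g_star \<nu> \<alpha> l)\<^sup>2)
       \<le> 2 * b * E * (C_nu \<nu> * Beta (1/2) \<nu>) + 2 * pi * E\<^sup>2"
proof -
  let ?R = "\<lambda>l. (b * aliased (g_star \<nu> \<alpha>) l + 1/(2*pi))\<^sup>2 - b\<^sup>2 * (g_star \<nu> \<alpha> l)\<^sup>2"
  have pointwise: "0 \<le> ?R l \<and> ?R l \<le> E * (2 * b * g_star \<nu> \<alpha> l + E)" if "l \<in> {-pi..pi}" for l
  proof -
    define x where "x = b * g_star \<nu> \<alpha> l"
    define e where "e = b * aliased (g_star \<nu> \<alpha>) l + 1/(2*pi) - x"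
    have "x \<ge> 0" unfolding x_def using g_star_pos[of \<nu> \<alpha> l] nu a b by simp
    moreover have "\<bar>l\<bar> \<le> pi" using that by auto
    hence "0 \<le> e" "e \<le> E"
      using alias_excess_bounds[OF nu b a] unfolding e_def x_def E_def by fastforce+
    moreover have "?R l = e * (2 * x + e)"
      unfolding e_def x_def by (simp add: algebra_simps power2_eq_square)
    ultimately show ?thesis unfolding x_def by (simp add: mult_mono mult.assoc)
  qed
  have cont: "continuous_on {-pi..pi} (g_star \<nu> \<alpha>)" "continuous_on {-pi..pi} (aliased (g_star \<nu> \<alpha>))"
    by (rule continuous_on_g_star[OF a(1)], rule continuous_on_aliased_g_star[OF nu a(1)])
  have int_R: "?R integrable_on {-pi..pi}"
    by (intro integrable_continuous_interval continuous_intros cont)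
  have int_g: "g_star \<nu> \<alpha> integrable_on {-pi..pi}"
    by (intro integrable_continuous_interval cont)
  have int_E: "(\<lambda>l. E * (2 * b * g_star \<nu> \<alpha> l + E)) integrable_on {-pi..pi}"
    by (intro integrable_continuous_interval continuous_intros cont)
  show "0 \<le> integral {-pi..pi} ?R" by (rule integral_nonneg[OF int_R]) (use pointwise in auto)
  have "integral {-pi..pi} ?R \<le> integral {-pi..pi} (\<lambda>l. E * (2 * b * g_star \<nu> \<alpha> l + E))"
    by (rule integral_le[OF int_R int_E]) (use pointwise in auto)
  also have "\<dots> = E * (2 * b * integral {-pi..pi} (g_star \<nu> \<alpha>) + 2 * pi * E)"
  proof -
    have "integral {-pi..pi} (\<lambda>l. 2 * b * g_star \<nu> \<alpha> l + E)
        = integral {-pi..pi} (\<lambda>l. 2 * b * g_star \<nu> \<alpha> l) + integral {-pi..pi} (\<lambda>l. E)"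
      by (rule integral_add) (use integrable_on_cmult_left[OF int_g, of "2*b"] in \<open>auto simp: mult.commute\<close>)
    thus ?thesis by (simp add: integral_cmult_real)
  qed
  also have "\<dots> \<le> E * (2 * b * (C_nu \<nu> * Beta (1/2) \<nu>) + 2 * pi * E)"
    using integral_g_star_le[OF nu a(1)] alias_excess_nonneg[of \<nu> b] nu b
    by (intro mult_left_mono add_right_mono) (auto simp: E_def)
  finally show "integral {-pi..pi} ?R \<le> 2 * b * E * (C_nu \<nu> * Beta (1/2) \<nu>) + 2 * pi * E\<^sup>2"
    by (simp add: algebra_simps power2_eq_square)
qed

(* First limit: alpha int (b G + 1/(2 pi))^2 --> b^2 C_nu^2 B(1/2, 2 nu + 1/2) as alpha -> 0+.
   The centre term converges by rescaling; the aliasing part is O(alpha). *)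
lemma tendsto_scaled_v1_integral:
  assumes nu: "\<nu> \<ge> 1/2" and b: "b > 0"
  shows "((\<lambda>\<alpha>. \<alpha> * integral {-pi..pi} (\<lambda>l. (b * aliased (g_star \<nu> \<alpha>) l + 1/(2*pi))\<^sup>2))
           \<longlongrightarrow> b\<^sup>2 * (C_nu \<nu>)\<^sup>2 * Beta (1/2) (2*\<nu>+1/2)) (at_right 0)"
proof -
  define E where "E = alias_excess \<nu> b"
  define K where "K = 2 * b * E * (C_nu \<nu> * Beta (1/2) \<nu>) + 2 * pi * E\<^sup>2"
  define R where "R \<alpha> = integral {-pi..pi} (\<lambda>l. (b * aliased (g_star \<nu> \<alpha>) l + 1/(2*pi))\<^sup>2 - b\<^sup>2 * (g_star \<nu> \<alpha> l)\<^sup>2)" for \<alpha>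
  have split: "\<alpha> * integral {-pi..pi} (\<lambda>l. (b * aliased (g_star \<nu> \<alpha>) l + 1/(2*pi))\<^sup>2)
      = b\<^sup>2 * ((C_nu \<nu>)\<^sup>2 * integral UNIV (trunc \<alpha> (kern (2*\<nu>+1)))) + \<alpha> * R \<alpha>" if a: "\<alpha> > 0" for \<alpha>
  proof -
    have "(\<lambda>l. (b * aliased (g_star \<nu> \<alpha>) l + 1/(2*pi))\<^sup>2) integrable_on {-pi..pi}"
      "(\<lambda>l. b\<^sup>2 * (g_star \<nu> \<alpha> l)\<^sup>2) integrable_on {-pi..pi}"
      by (intro integrable_continuous_interval continuous_intros continuous_on_aliased_g_star
          continuous_on_g_star nu a)+
    hence "R \<alpha> = integral {-pi..pi} (\<lambda>l. (b * aliased (g_star \<nu> \<alpha>) l + 1/(2*pi))\<^sup>2)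
                 - b\<^sup>2 * integral {-pi..pi} (\<lambda>l. (g_star \<nu> \<alpha> l)\<^sup>2)"
      unfolding R_def by (simp add: integral_diff integral_cmult_real)
    hence "\<alpha> * integral {-pi..pi} (\<lambda>l. (b * aliased (g_star \<nu> \<alpha>) l + 1/(2*pi))\<^sup>2)
        = \<alpha> * (R \<alpha> + b\<^sup>2 * integral {-pi..pi} (\<lambda>l. (g_star \<nu> \<alpha> l)\<^sup>2))"
      by simp
    also have "\<dots> = b\<^sup>2 * (\<alpha> * integral {-pi..pi} (\<lambda>l. (g_star \<nu> \<alpha> l)\<^sup>2)) + \<alpha> * R \<alpha>"
      by (simp add: algebra_simps)
    finally show ?thesis unfolding scaled_integral_g_star_sq[OF a] .
  qed
  have "((\<lambda>\<alpha>. integral UNIV (trunc \<alpha> (kern (2*\<nu>+1)))) \<longlongrightarrow> integral UNIV (kern (2*\<nu>+1))) (at_right 0)"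
    using nu by (intro tendsto_integral_trunc kern_integrable less_imp_le[OF kern_pos]) simp
  moreover have "integral UNIV (kern (2*\<nu>+1)) = Beta (1/2) (2*\<nu>+1/2)"
    using integral_kern[of "2*\<nu>+1"] nu by (simp add: add_ac)
  ultimately have "((\<lambda>\<alpha>. integral UNIV (trunc \<alpha> (kern (2*\<nu>+1)))) \<longlongrightarrow> Beta (1/2) (2*\<nu>+1/2)) (at_right 0)"
    by simp
  hence centre: "((\<lambda>\<alpha>. b\<^sup>2 * ((C_nu \<nu>)\<^sup>2 * integral UNIV (trunc \<alpha> (kern (2*\<nu>+1)))))
      \<longlongrightarrow> b\<^sup>2 * ((C_nu \<nu>)\<^sup>2 * Beta (1/2) (2*\<nu>+1/2))) (at_right 0)"
    by (intro tendsto_mult_left)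
  have "eventually (\<lambda>\<alpha>. 0 < \<alpha> \<and> \<alpha> < 1) (at_right (0::real))"
    using eventually_in_rescaled_range[OF zero_less_one, of 0] by eventually_elim auto
  hence "eventually (\<lambda>\<alpha>. 0 \<le> \<alpha> * R \<alpha>) (at_right 0)" "eventually (\<lambda>\<alpha>. \<alpha> * R \<alpha> \<le> \<alpha> * K) (at_right 0)"
    by (eventually_elim, use integral_alias_excess_bounds[OF nu b] in \<open>auto simp: R_def K_def E_def\<close>)+
  moreover have "((\<lambda>\<alpha>. \<alpha> * K) \<longlongrightarrow> 0 * K) (at_right (0::real))"
    by (intro tendsto_mult_right tendsto_ident_at)
  hence "((\<lambda>\<alpha>. \<alpha> * K) \<longlongrightarrow> 0) (at_right (0::real))" by simp
  ultimately have aliasing: "((\<lambda>\<alpha>. \<alpha> * R \<alpha>) \<longlongrightarrow> 0) (at_right 0)"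
    by (rule tendsto_sandwich[OF _ _ tendsto_const])
  have "eventually (\<lambda>\<alpha>. b\<^sup>2 * ((C_nu \<nu>)\<^sup>2 * integral UNIV (trunc \<alpha> (kern (2*\<nu>+1)))) + \<alpha> * R \<alpha>
      = \<alpha> * integral {-pi..pi} (\<lambda>l. (b * aliased (g_star \<nu> \<alpha>) l + 1/(2*pi))\<^sup>2)) (at_right 0)"
    using eventually_at_right_less[of 0] by eventually_elim (simp add: split)
  from Lim_transform_eventually[OF tendsto_add[OF centre aliasing] this] show ?thesis
    by (simp add: mult.assoc)
qed

(* Upper bound for the rescaled score: score_sq at alpha u is at most (1 + u^2)^(-2),
   since N <= G/(1 + u^2). *)
lemma score_sq_rescaled_upper:
  assumes nu: "\<nu> \<ge> 1/2" and b: "b > 0" and a: "\<alpha> > 0" and l: "\<bar>\<alpha>*u\<bar> \<le> pi"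
  shows "0 \<le> score_sq \<nu> b \<alpha> (\<alpha>*u)" "score_sq \<nu> b \<alpha> (\<alpha>*u) \<le> kern 2 u"
proof -
  define G where "G = aliased (g_star \<nu> \<alpha>) (\<alpha>*u)"
  define N where "N = aliased (w_star \<nu> \<alpha>) (\<alpha>*u)"
  note ratio = rescaled_ratio[OF a, of u]
  have G: "G > 0" unfolding G_def by (rule aliased_g_star_bounds(3)[OF nu a l])
  have "0 \<le> w_star \<nu> \<alpha> (\<alpha>*u)" using w_star_bounds(1)[of \<nu> \<alpha> 0] nu a by simp
  hence N0: "N \<ge> 0" unfolding N_def using aliased_w_star_bounds(1)[OF nu a l] by linarith
  have NG: "N \<le> 1 / (1 + u\<^sup>2) * G" unfolding N_def G_def using aliased_w_star_bounds(2)[OF nu a l] ratio by simp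
  have "b * N / (b * G + 1/(2*pi)) \<le> b * N / (b * G)"
    using N0 G b by (intro divide_left_mono) (auto intro!: mult_pos_pos add_pos_pos)
  also have "\<dots> \<le> 1 / (1 + u\<^sup>2)" using NG G b by (simp add: divide_le_eq)
  finally have "(b * N / (b * G + 1/(2*pi)))\<^sup>2 \<le> (1 / (1 + u\<^sup>2))\<^sup>2"
    using N0 G b by (intro power_mono) auto
  thus "score_sq \<nu> b \<alpha> (\<alpha>*u) \<le> kern 2 u" unfolding score_sq_def kern_two N_def G_def .
  show "0 \<le> score_sq \<nu> b \<alpha> (\<alpha>*u)" unfolding score_sq_def by simp
qed

(* Lower bound for the rescaled score, which tends to (1 + u^2)^(-2) as alpha -> 0+:
   N >= g*/(1 + u^2) and b G + 1/(2 pi) <= b g* + alias_excess. *)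
lemma score_sq_rescaled_lower:
  assumes nu: "\<nu> \<ge> 1/2" and b: "b > 0" and a: "0 < \<alpha>" "\<alpha> < 1" and l: "\<bar>\<alpha>*u\<bar> \<le> pi"
  defines "p \<equiv> b * C_nu \<nu> * kern (\<nu>+1/2) u"
  shows "kern 2 u * (p / (p + \<alpha> * alias_excess \<nu> b))\<^sup>2 \<le> score_sq \<nu> b \<alpha> (\<alpha>*u)"
proof -
  define G where "G = aliased (g_star \<nu> \<alpha>) (\<alpha>*u)"
  define N where "N = aliased (w_star \<nu> \<alpha>) (\<alpha>*u)"
  define g where "g = g_star \<nu> \<alpha> (\<alpha>*u)"
  define r where "r = 1 / (1 + u\<^sup>2)"
  define E where "E = alias_excess \<nu> b"
  have r: "r > 0" unfolding r_def by (simp add: add_pos_nonneg)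
  have p: "p > 0" unfolding p_def using b C_nu_pos[of \<nu>] nu kern_pos by simp
  have E: "E \<ge> 0" unfolding E_def using alias_excess_nonneg[of \<nu> b] nu b by simp
  have g: "b * g = p / \<alpha>" unfolding g_def p_def using g_star_rescaled[OF a(1)] by simp
  have "w_star \<nu> \<alpha> (\<alpha>*u) = g * r"
    unfolding w_star_def g_def r_def rescaled_ratio[OF a(1)] ..
  hence N: "g * r \<le> N" unfolding N_def using aliased_w_star_bounds(1)[OF nu a(1) l] by simp
  have denom: "b * G + 1/(2*pi) \<le> b * g + E" "0 < b * G + 1/(2*pi)"
    using alias_excess_bounds(2)[OF nu b a l] aliased_g_star_bounds(3)[OF nu a(1) l] b
    by (auto simp: G_def g_def E_def intro!: add_pos_pos)
  have "r * (p / (p + \<alpha> * E)) = b * g * r / (b * g + E)"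
    unfolding g using a p E by (simp add: field_simps)
  also have "\<dots> \<le> b * N / (b * G + 1/(2*pi))"
  proof (rule frac_le)
    show numer: "b * g * r \<le> b * N" using mult_left_mono[OF N, of b] b by (simp add: mult.assoc)
    have "0 < b * g" unfolding g using p a by simp
    thus "0 \<le> b * N" using r numer by (meson less_imp_le mult_nonneg_nonneg order_trans)
  qed (use denom in auto)
  finally have "(r * (p / (p + \<alpha> * E)))\<^sup>2 \<le> (b * N / (b * G + 1/(2*pi)))\<^sup>2"
    using r p E a by (intro power_mono) auto
  thus ?thesis unfolding score_sq_def kern_two power_mult_distrib r_def N_def G_def E_def .
qed

lemma tendsto_rescaled_sigma4_integral:
  assumes nu: "\<nu> \<ge> 1/2" and b: "b > 0"
  shows "((\<lambda>\<alpha>. integral {-pi..pi} (score_sq \<nu> b \<alpha>) / \<alpha>) \<longlongrightarrow> Beta (1/2) (3/2)) (at_right 0)"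
proof -
  define f where "f \<alpha> = trunc \<alpha> (\<lambda>u. score_sq \<nu> b \<alpha> (\<alpha>*u))" for \<alpha>
  have "((\<lambda>\<alpha>. integral UNIV (f \<alpha>)) \<longlongrightarrow> integral UNIV (kern 2)) (at_right 0)"
  proof (rule tendsto_integral_at_right_dominated)
    show "kern 2 integrable_on UNIV" by (rule kern_integrable) simp
    show "f \<alpha> integrable_on UNIV" if "0 < \<alpha>" for \<alpha>
      unfolding f_def by (rule integral_rescale(1)[OF that continuous_on_score_sq[OF nu b that]])
    show "\<bar>f \<alpha> u\<bar> \<le> kern 2 u" if "0 < \<alpha>" for \<alpha> u
      using score_sq_rescaled_upper[OF nu b that abs_rescaled_le_pi[OF that]] kern_pos[of 2 u]
      by (auto simp: f_def trunc_def)
    show "((\<lambda>\<alpha>. f \<alpha> u) \<longlongrightarrow> kern 2 u) (at_right 0)" for u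
    proof -
      define p where "p = b * C_nu \<nu> * kern (\<nu>+1/2) u"
      have "p > 0" unfolding p_def using b C_nu_pos[of \<nu>] nu kern_pos by simp
      hence "((\<lambda>\<alpha>. kern 2 u * (p / (p + \<alpha> * alias_excess \<nu> b))\<^sup>2)
          \<longlongrightarrow> kern 2 u * (p / (p + 0 * alias_excess \<nu> b))\<^sup>2) (at_right 0)"
        by (intro tendsto_intros) (auto simp: tendsto_ident_at)
      hence lower: "((\<lambda>\<alpha>. kern 2 u * (p / (p + \<alpha> * alias_excess \<nu> b))\<^sup>2) \<longlongrightarrow> kern 2 u) (at_right 0)"
        using \<open>p > 0\<close> by simp
      have "eventually (\<lambda>\<alpha>. kern 2 u * (p / (p + \<alpha> * alias_excess \<nu> b))\<^sup>2 \<le> f \<alpha> u \<and> f \<alpha> u \<le> kern 2 u)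
            (at_right 0)"
        using eventually_in_rescaled_range[OF zero_less_one, of u]
      proof eventually_elim
        case (elim \<alpha>)
        hence l: "\<bar>\<alpha>*u\<bar> \<le> pi" by (intro abs_rescaled_le_pi) auto
        show ?case using score_sq_rescaled_lower[OF nu b _ _ l] score_sq_rescaled_upper[OF nu b _ l] elim
          by (simp add: f_def trunc_def p_def)
      qed
      thus ?thesis
        by (intro tendsto_sandwich[OF _ _ lower tendsto_const]) (auto elim: eventually_mono)
    qed
  qed
  moreover have "eventually (\<lambda>\<alpha>. integral UNIV (f \<alpha>) = integral {-pi..pi} (score_sq \<nu> b \<alpha>) / \<alpha>) (at_right 0)"
    using eventually_at_right_less[of 0]
    by eventually_elim (simp add: f_def integral_rescale(2)[OF _ continuous_on_score_sq[OF nu b]])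
  ultimately show ?thesis using integral_kern[of 2] by (simp add: Lim_transform_eventually)
qed

lemma ineff_eq_limit_product:
  assumes nu: "\<nu> \<ge> 1/2" and b: "b > 0"
  shows "((2*\<nu>+1)/(2*\<nu>))\<^sup>2 / b\<^sup>2 * (b\<^sup>2 * (C_nu \<nu>)\<^sup>2 * Beta (1/2) (2*\<nu>+1/2)) * Beta (1/2) (3/2) = ineff \<nu>"
proof -
  have "(1/2 :: real) \<notin> \<int>\<^sub>\<le>\<^sub>0" by (auto dest: nonpos_Ints_nonpos)
  hence G32: "Gamma (3/2 :: real) = sqrt pi / 2"
    using Gamma_plus1[of "1/2 :: real"] Gamma_one_half_real by simp
  have G2: "Gamma (2 :: real) = 1" using Gamma_fact[of 1, where 'a=real] by simp
  have B_three_halves: "Beta (1/2) (3/2 :: real) = sqrt pi * sqrt pi / 2"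
    unfolding Beta_def Gamma_one_half_real G32 by (simp add: G2)
  have B_main: "Beta (1/2) (2*\<nu>+1/2) = sqrt pi * Gamma (2*\<nu>+1/2) / Gamma (2*\<nu>+1)"
    unfolding Beta_def Gamma_one_half_real by (simp add: add_ac)
  have algebra: "((2*\<nu>+1)/(2*\<nu>))\<^sup>2 / b\<^sup>2 * (b\<^sup>2 * (A / (s * Gn))\<^sup>2 * (s * Bg / G2)) * (s * s / 2)
       = s / 2 * ((2*\<nu>+1)/(2*\<nu>))\<^sup>2 * (A\<^sup>2 * Bg) / (Gn\<^sup>2 * G2)"
    if "Gn > 0" "G2 > 0" "s > 0" for A Bg Gn G2 s :: real
    using that b nu by (simp add: field_simps power2_eq_square)
  show ?thesis
    unfolding B_main B_three_halves ineff_def C_nu_def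
    by (rule algebra) (use nu in \<open>auto intro!: Gamma_real_pos\<close>)
qed

theorem theorem4p4:
  fixes \<nu> b0 \<theta>0 :: real
  assumes "\<nu> \<ge> 1/2" and "b0 > 0" and "\<theta>0 > 0"
  shows "((\<lambda>\<delta>. I4 \<nu> \<delta> b0 \<theta>0) \<longlongrightarrow> ineff \<nu>) (at_right 0)"
proof -
  note nu = assms(1) and b = assms(2) and th = assms(3)
  define F where "F \<alpha> = ((2*\<nu>+1)/(2*\<nu>))\<^sup>2 / b0\<^sup>2 *
     (\<alpha> * integral {-pi..pi} (\<lambda>l. (b0 * aliased (g_star \<nu> \<alpha>) l + 1/(2*pi))\<^sup>2)) *
     (integral {-pi..pi} (score_sq \<nu> b0 \<alpha>) / \<alpha>)" for \<alpha>
  have "(F \<longlongrightarrow> ineff \<nu>) (at_right 0)"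
    unfolding F_def ineff_eq_limit_product[OF nu b, symmetric]
    by (intro tendsto_mult tendsto_const tendsto_scaled_v1_integral[OF nu b]
        tendsto_rescaled_sigma4_integral[OF nu b])
  moreover have "filterlim (\<lambda>\<delta>. \<delta> * \<theta>0) (at_right 0) (at_right 0)"
    by (rule filterlim_scale_at_right_0[OF th])
  ultimately have "((\<lambda>\<delta>. F (\<delta> * \<theta>0)) \<longlongrightarrow> ineff \<nu>) (at_right 0)"
    by (rule filterlim_compose)
  moreover have "eventually (\<lambda>\<delta>. F (\<delta> * \<theta>0) = I4 \<nu> \<delta> b0 \<theta>0) (at_right 0)"
    using eventually_at_right_less[of 0] by eventually_elim (simp add: F_def I4_eq[OF nu b _ th] mult.commute)
  ultimately show ?thesis by (rule Lim_transform_eventually)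
qed

end
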